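(* Let $n>2$ be an integer and fix $a\in\mathbb{R}$ and $b\in\mathbb{R}$ with $b\ne0$. For $c\in\mathbb{R}$ define \[\lambda_\pm(c)=\tfrac12\Bigl(2a-(n-1)c\pm\sqrt{\bigl(2a+(n+1)c\bigr)^2+4nb^2}\Bigr)\] (these are the two eigenvalues $\lambda_\pm$ of the matrix $m_n(a,b,c)$ described in the context) and $\lambda_{\mathrm{sep}}(c)=c+2a$. Then: (a) $c\mapsto\lambda_+(c)$ is strictly convex and $c\mapsto\lambda_-(c)$ is strictly concave on $\mathbb{R}$; (b) $\lambda_-(c)<\lambda_{\mathrm{sep}}(c)<\lambda_+(c)$ for every $c\in\mathbb{R}$ (so the three graphs have no common points), and the line $\lambda=c+2a$ is an asymptote of $\lambda=\lambda_+(c)$ as $c\to+\infty$ and of $\lambda=\lambda_-(c)$ as $c\to-\infty$; (c) the line $\lambda=-nc$ (independent of $a$) is the other asymptote of the curves $\lambda=\lambda_\pm(c)$ (namely of $\lambda_+$ as $c\to-\infty$ and of $\lambda_-$ as $c\to+\infty$).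
   Context: For $n>2$ and real $a,b,c$, $m_n(a,b,c)$ is the $(n+1)\times(n+1)$ symmetric matrix with rows/columns indexed $0,\dots,n$, $(0,0)$-entry $-nc$, $(0,j)$- and $(j,0)$-entries $b$ ($j=1,\dots,n$), and lower-right block the circulant $\mathrm{circ}(c,a,0,\dots,0,a)$ (diagonal $c$, entries $a$ at positions $(j,j\pm1 \bmod n)$, zeros elsewhere). *)

theory Defs
  imports "HOL-Analysis.Analysis"
begin

definition strict_convex_on :: "real set \<Rightarrow> (real \<Rightarrow> real) \<Rightarrow> bool" where
  "strict_convex_on S f \<longleftrightarrow> convex S \<and>
     (\<forall>x\<in>S. \<forall>y\<in>S. x \<noteq> y \<longrightarrow> (\<forall>u. 0 < u \<and> u < 1 \<longrightarrow>
        f (u * x + (1 - u) * y) < u * f x + (1 - u) * f y))"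

definition strict_concave_on :: "real set \<Rightarrow> (real \<Rightarrow> real) \<Rightarrow> bool" where
  "strict_concave_on S f \<longleftrightarrow> strict_convex_on S (\<lambda>x. - f x)"

definition lam_plus :: "nat \<Rightarrow> real \<Rightarrow> real \<Rightarrow> real \<Rightarrow> real" where
  "lam_plus n a b c = (2*a - (real n - 1)*c + sqrt ((2*a + (real n + 1)*c)^2 + 4 * real n * b^2)) / 2"

definition lam_minus :: "nat \<Rightarrow> real \<Rightarrow> real \<Rightarrow> real \<Rightarrow> real" where
  "lam_minus n a b c = (2*a - (real n - 1)*c - sqrt ((2*a + (real n + 1)*c)^2 + 4 * real n * b^2)) / 2"

definition lam_sep :: "real \<Rightarrow> real \<Rightarrow> real" where
  "lam_sep a c = c + 2*a"

end

theory Submission imports Defs "HOL-Real_Asymp.Real_Asymp" begin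

text \<open>With \<open>\<sigma> = c + 2a\<close>, \<open>\<nu> = -nc\<close> and \<open>K = 4nb\<^sup>2 > 0\<close> the eigenvalues are
  \<open>\<lambda>\<^sub>\<pm> = (\<sigma> + \<nu> \<pm> sqrt ((\<sigma> - \<nu>)\<^sup>2 + K)) / 2\<close>, where \<open>\<sigma> - \<nu> = 2a + (n+1)c\<close> is a
  non-constant affine function of \<open>c\<close>. Hence \<open>\<lambda>\<^sub>+ - \<sigma>\<close>, \<open>\<lambda>\<^sub>+ - \<nu>\<close>, \<open>\<sigma> - \<lambda>\<^sub>-\<close> and
  \<open>\<nu> - \<lambda>\<^sub>-\<close> are all of the form \<open>(sqrt (t\<^sup>2 + K) \<mp> t) / 2\<close>, and everything follows
  from the hyperbola \<open>t \<mapsto> sqrt (t\<^sup>2 + K)\<close> being strictly convex, lying strictly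
  above \<open>\<bar>t\<bar>\<close> and having the asymptotes \<open>\<pm>t\<close>.\<close>

lemma strict_convex_on_sqrt_square_plus:
  fixes K :: real
  assumes K: "K > 0"
  shows "strict_convex_on UNIV (\<lambda>t. sqrt (t\<^sup>2 + K))"
  unfolding strict_convex_on_def
proof (intro conjI ballI impI allI convex_UNIV)
  fix x y u :: real
  assume "x \<noteq> y" and u: "0 < u \<and> u < 1"
  define P where "P = sqrt (x\<^sup>2 + K) * sqrt (y\<^sup>2 + K)"
  define B where "B = u * sqrt (x\<^sup>2 + K) + (1 - u) * sqrt (y\<^sup>2 + K)"
  have "(x * y + K)\<^sup>2 < (x\<^sup>2 + K) * (y\<^sup>2 + K)"
  proof -
    have "K * (x - y)\<^sup>2 > 0" using K \<open>x \<noteq> y\<close> by simp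
    then show ?thesis by (simp add: power2_eq_square algebra_simps)
  qed
  then have "x * y + K < P"
    unfolding P_def real_sqrt_mult[symmetric] by (rule real_less_rsqrt)
  then have "u * (1 - u) * (x * y + K) < u * (1 - u) * P"
    using u by (intro mult_strict_left_mono) auto
  moreover have "B\<^sup>2 = u\<^sup>2 * (x\<^sup>2 + K) + (1 - u)\<^sup>2 * (y\<^sup>2 + K) + 2 * u * (1 - u) * P"
    using K unfolding B_def P_def by (simp add: power2_eq_square algebra_simps)
  ultimately have "(u * x + (1 - u) * y)\<^sup>2 + K < B\<^sup>2"
    by (simp add: power2_eq_square algebra_simps)
  moreover have "B > 0"
    using u K unfolding B_def by (intro add_pos_pos mult_pos_pos) (auto intro: add_nonneg_pos)
  ultimately show "sqrt ((u * x + (1 - u) * y)\<^sup>2 + K) < B"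
    by (simp add: real_less_lsqrt)
qed

lemma strict_convex_on_compose_affine:
  fixes f :: "real \<Rightarrow> real"
  assumes "strict_convex_on UNIV f" and "m \<noteq> 0"
  shows "strict_convex_on UNIV (\<lambda>x. f (m * x + q))"
  unfolding strict_convex_on_def
proof (intro conjI ballI impI allI convex_UNIV)
  fix x y u :: real
  assume "x \<noteq> y" and u: "0 < u \<and> u < 1"
  then have "m * x + q \<noteq> m * y + q" using \<open>m \<noteq> 0\<close> by simp
  moreover have "m * (u * x + (1 - u) * y) + q = u * (m * x + q) + (1 - u) * (m * y + q)"
    by (simp add: algebra_simps)
  ultimately show "f (m * (u * x + (1 - u) * y) + q) < u * f (m * x + q) + (1 - u) * f (m * y + q)"
    using assms(1) u unfolding strict_convex_on_def by simp
qed

lemma strict_convex_on_scale_add_affine: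
  fixes f :: "real \<Rightarrow> real"
  assumes "strict_convex_on S f" and "r > 0"
  shows "strict_convex_on S (\<lambda>x. r * f x + p * x + q)"
  unfolding strict_convex_on_def
proof (intro conjI ballI impI allI)
  show "convex S" using assms(1) unfolding strict_convex_on_def by simp
  fix x y u :: real
  assume "x \<in> S" "y \<in> S" "x \<noteq> y" and u: "0 < u \<and> u < 1"
  then have "r * f (u * x + (1 - u) * y) < r * (u * f x + (1 - u) * f y)"
    using assms unfolding strict_convex_on_def by simp
  then show "r * f (u * x + (1 - u) * y) + p * (u * x + (1 - u) * y) + q
      < u * (r * f x + p * x + q) + (1 - u) * (r * f y + p * y + q)"
    by (simp add: algebra_simps)
qed

lemma abs_less_sqrt_square_plus:
  fixes t K :: real
  assumes "K > 0"
  shows "\<bar>t\<bar> < sqrt (t\<^sup>2 + K)"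
  using assms by (intro real_less_rsqrt) simp

lemma sqrt_square_plus_asymptotes:
  fixes m K d :: real
  assumes "m > 0"
  shows "((\<lambda>c. sqrt ((m * c + d)\<^sup>2 + K) - (m * c + d)) \<longlongrightarrow> 0) at_top"
    and "((\<lambda>c. sqrt ((m * c + d)\<^sup>2 + K) + (m * c + d)) \<longlongrightarrow> 0) at_bot"
proof -
  have "((\<lambda>t. sqrt (t\<^sup>2 + K) - t) \<longlongrightarrow> 0) at_top" by real_asymp
  moreover have "filterlim (\<lambda>c. m * c + d) at_top at_top" using assms by real_asymp
  ultimately show "((\<lambda>c. sqrt ((m * c + d)\<^sup>2 + K) - (m * c + d)) \<longlongrightarrow> 0) at_top"
    by (rule filterlim_compose)
  have "((\<lambda>t. sqrt (t\<^sup>2 + K) + t) \<longlongrightarrow> 0) at_bot" by real_asymp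
  moreover have "filterlim (\<lambda>c. m * c + d) at_bot at_bot" using assms by real_asymp
  ultimately show "((\<lambda>c. sqrt ((m * c + d)\<^sup>2 + K) + (m * c + d)) \<longlongrightarrow> 0) at_bot"
    by (rule filterlim_compose)
qed

lemma lam_plus_eq:
  "lam_plus n a b =
    (\<lambda>c. 1/2 * sqrt (((real n + 1) * c + 2 * a)\<^sup>2 + 4 * real n * b\<^sup>2) + (- (real n - 1) / 2) * c + a)"
  unfolding lam_plus_def by (auto simp: field_simps)

lemma neg_lam_minus_eq:
  "(\<lambda>c. - lam_minus n a b c) =
    (\<lambda>c. 1/2 * sqrt (((real n + 1) * c + 2 * a)\<^sup>2 + 4 * real n * b\<^sup>2) + ((real n - 1) / 2) * c + - a)"
  unfolding lam_minus_def by (auto simp: field_simps)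

lemma
  fixes n :: nat and a b c :: real
  defines "t \<equiv> (real n + 1) * c + 2 * a" and "K \<equiv> 4 * real n * b\<^sup>2"
  shows lam_plus_minus_lam_sep: "lam_plus n a b c - lam_sep a c = (sqrt (t\<^sup>2 + K) - t) / 2"
    and lam_sep_minus_lam_minus: "lam_sep a c - lam_minus n a b c = (sqrt (t\<^sup>2 + K) + t) / 2"
    and lam_plus_minus_neg_linear: "lam_plus n a b c - (- real n * c) = (sqrt (t\<^sup>2 + K) + t) / 2"
    and neg_linear_minus_lam_minus: "- real n * c - lam_minus n a b c = (sqrt (t\<^sup>2 + K) - t) / 2"
  unfolding lam_plus_def lam_minus_def lam_sep_def t_def K_def
  by (simp_all add: algebra_simps add_divide_distrib diff_divide_distrib)

theorem lemma1:
  fixes n :: nat and a b :: real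
  assumes "n > 2" and "b \<noteq> 0"
  shows "strict_convex_on UNIV (lam_plus n a b) \<and> strict_concave_on UNIV (lam_minus n a b)
    \<and> (\<forall>c. lam_minus n a b c < lam_sep a c \<and> lam_sep a c < lam_plus n a b c)
    \<and> ((\<lambda>c. lam_plus n a b c - lam_sep a c) \<longlongrightarrow> 0) at_top
    \<and> ((\<lambda>c. lam_minus n a b c - lam_sep a c) \<longlongrightarrow> 0) at_bot
    \<and> ((\<lambda>c. lam_plus n a b c - (- real n * c)) \<longlongrightarrow> 0) at_bot
    \<and> ((\<lambda>c. lam_minus n a b c - (- real n * c)) \<longlongrightarrow> 0) at_top"
proof -
  define K where "K = 4 * real n * b\<^sup>2"
  have K: "K > 0" unfolding K_def using assms by simp
  have hyperbola: "strict_convex_on UNIV (\<lambda>c. sqrt (((real n + 1) * c + 2 * a)\<^sup>2 + K))"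
    using strict_convex_on_compose_affine[OF strict_convex_on_sqrt_square_plus[OF K]] by simp
  have convex: "strict_convex_on UNIV (lam_plus n a b)"
    unfolding lam_plus_eq K_def[symmetric]
    by (rule strict_convex_on_scale_add_affine[OF hyperbola]) simp
  have concave: "strict_concave_on UNIV (lam_minus n a b)"
    unfolding strict_concave_on_def neg_lam_minus_eq K_def[symmetric]
    by (rule strict_convex_on_scale_add_affine[OF hyperbola]) simp
  have separated: "lam_minus n a b c < lam_sep a c \<and> lam_sep a c < lam_plus n a b c" for c
    using abs_less_sqrt_square_plus[OF K, of "(real n + 1) * c + 2 * a"]
      lam_plus_minus_lam_sep[of n a b c] lam_sep_minus_lam_minus[of a c n b]
    unfolding K_def by (simp add: abs_less_iff)
  have "real n + 1 > 0" by simp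
  note asymptotes = sqrt_square_plus_asymptotes[OF this, of "2 * a" K, THEN tendsto_divide_zero, of 2]
  have "((\<lambda>c. lam_plus n a b c - lam_sep a c) \<longlongrightarrow> 0) at_top"
    unfolding lam_plus_minus_lam_sep K_def[symmetric] by (rule asymptotes(1))
  moreover have "((\<lambda>c. lam_minus n a b c - lam_sep a c) \<longlongrightarrow> 0) at_bot"
    using tendsto_minus[OF asymptotes(2)]
    unfolding K_def lam_sep_minus_lam_minus[symmetric] by simp
  moreover have "((\<lambda>c. lam_plus n a b c - (- real n * c)) \<longlongrightarrow> 0) at_bot"
    unfolding lam_plus_minus_neg_linear K_def[symmetric] by (rule asymptotes(2))
  moreover have "((\<lambda>c. lam_minus n a b c - (- real n * c)) \<longlongrightarrow> 0) at_top"
    using tendsto_minus[OF asymptotes(1)]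
    unfolding K_def neg_linear_minus_lam_minus[symmetric] by simp
  ultimately show ?thesis
    using convex concave separated by blast
qed

end
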